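(* Assume the standing assumptions in the context. Let $v=(v_1,v_2)$ be the bounded constrained viscosity solution on $[\underline{x},+\infty)$ of the system $$\rho v_j(x)=H(x,y_j,Dv_j(x))+\lambda_j\big(v_{\bar\jmath}(x)-v_j(x)\big),\qquad j=1,2,\ \bar\jmath=3-j.$$ Then each $v_j$ is Lipschitz continuous on $[\underline{x},+\infty)$.
   Context: Standing assumptions: $\rho>0$; $-\infty<r<\rho$; $0<y_1<y_2$; $\gamma>1$; $\underline{x}\le0$ with $\rho\underline{x}+y_j>0$ for $j=1,2$; $\lambda_1,\lambda_2\ge0$ constants. Utility $u(c)=\frac{c^{1-\gamma}}{1-\gamma}$; Hamiltonian $H(x,y_j,p)=\sup_{c\ge0}\{u(c)+(rx+y_j-c)p\}$, equal to $(rx+y_j)p+\frac{\gamma}{1-\gamma}p^{1-1/\gamma}$ for $p\ge0$ and $+\infty$ for $p<0$. Viscosity subsolution on $S\subseteq[\underline{x},\infty)$: u.s.c. pair $v$ such that whenever $\varphi$ smooth, $j\in\{1,2\}$, and $v_j-\varphi$ has a local max (relative to $[\underline{x},\infty)$) at $x_0\in S$, then $\rho v_j(x_0)\le H(x_0,y_j,D\varphi(x_0))+\lambda_j(v_{\bar\jmath}(x_0)-v_j(x_0))$. Viscosity supersolution on $S$: l.s.c. pair with the reverse inequality at local minima $x_0\in S$. A constrained viscosity solution is a continuous pair that is a viscosity supersolution on $(\underline{x},\infty)$ and a viscosity subsolution on $[\underline{x},\infty)$ (such a bounded solution is unique). *)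

theory Defs
  imports "HOL-Analysis.Analysis"
begin

definition usc_on :: "real set \<Rightarrow> (real \<Rightarrow> real) \<Rightarrow> bool" where
  "usc_on D f \<longleftrightarrow> (\<forall>x\<in>D. \<forall>a. f x < a \<longrightarrow>
      (\<exists>e>0. \<forall>z\<in>D. \<bar>z - x\<bar> < e \<longrightarrow> f z < a))"

definition lsc_on :: "real set \<Rightarrow> (real \<Rightarrow> real) \<Rightarrow> bool" where
  "lsc_on D f \<longleftrightarrow> (\<forall>x\<in>D. \<forall>a. a < f x \<longrightarrow>
      (\<exists>e>0. \<forall>z\<in>D. \<bar>z - x\<bar> < e \<longrightarrow> a < f z))"

text \<open>Hamiltonian H(x,y,p) = sup_{c\<ge>0} (u(c) + (r x + y - c) p), u(c) = c^(1-\<gamma>)/(1-\<gamma>),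
  in its closed form: finite for p \<ge> 0, +\<infinity> for p < 0.\<close>
definition Ham :: "real \<Rightarrow> real \<Rightarrow> real \<Rightarrow> real \<Rightarrow> real \<Rightarrow> ereal" where
  "Ham r \<gamma> x y p = (if 0 \<le> p
      then ereal ((r * x + y) * p + \<gamma> / (1 - \<gamma>) * p powr (1 - 1 / \<gamma>))
      else \<infinity>)"

definition loc_max_rel :: "real set \<Rightarrow> (real \<Rightarrow> real) \<Rightarrow> real \<Rightarrow> bool" where
  "loc_max_rel D g x0 \<longleftrightarrow> (\<exists>e>0. \<forall>x\<in>D. \<bar>x - x0\<bar> < e \<longrightarrow> g x \<le> g x0)"

definition loc_min_rel :: "real set \<Rightarrow> (real \<Rightarrow> real) \<Rightarrow> real \<Rightarrow> bool" where
  "loc_min_rel D g x0 \<longleftrightarrow> (\<exists>e>0. \<forall>x\<in>D. \<bar>x - x0\<bar> < e \<longrightarrow> g x0 \<le> g x)"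

text \<open>Pairs v = (v 1, v 2); index j \<in> {1,2}, conjugate index 3 - j.\<close>
definition visc_sub ::
  "real \<Rightarrow> real \<Rightarrow> real \<Rightarrow> (nat \<Rightarrow> real) \<Rightarrow> (nat \<Rightarrow> real) \<Rightarrow> real \<Rightarrow> real set
     \<Rightarrow> (nat \<Rightarrow> real \<Rightarrow> real) \<Rightarrow> bool" where
  "visc_sub \<rho> r \<gamma> y lam xl S v \<longleftrightarrow>
     (\<forall>j\<in>{1,2::nat}. usc_on {xl..} (v j)) \<and>
     (\<forall>\<phi> j x0. \<phi> C1_differentiable_on UNIV \<longrightarrow> j \<in> {1,2} \<longrightarrow> x0 \<in> S \<longrightarrow>
        loc_max_rel {xl..} (\<lambda>x. v j x - \<phi> x) x0 \<longrightarrow>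
        ereal (\<rho> * v j x0) \<le> Ham r \<gamma> x0 (y j) (deriv \<phi> x0)
                               + ereal (lam j * (v (3 - j) x0 - v j x0)))"

definition visc_super ::
  "real \<Rightarrow> real \<Rightarrow> real \<Rightarrow> (nat \<Rightarrow> real) \<Rightarrow> (nat \<Rightarrow> real) \<Rightarrow> real \<Rightarrow> real set
     \<Rightarrow> (nat \<Rightarrow> real \<Rightarrow> real) \<Rightarrow> bool" where
  "visc_super \<rho> r \<gamma> y lam xl S v \<longleftrightarrow>
     (\<forall>j\<in>{1,2::nat}. lsc_on {xl..} (v j)) \<and>
     (\<forall>\<phi> j x0. \<phi> C1_differentiable_on UNIV \<longrightarrow> j \<in> {1,2} \<longrightarrow> x0 \<in> S \<longrightarrow>
        loc_min_rel {xl..} (\<lambda>x. v j x - \<phi> x) x0 \<longrightarrow>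
        Ham r \<gamma> x0 (y j) (deriv \<phi> x0) + ereal (lam j * (v (3 - j) x0 - v j x0))
          \<le> ereal (\<rho> * v j x0))"

definition constrained_visc_sol ::
  "real \<Rightarrow> real \<Rightarrow> real \<Rightarrow> (nat \<Rightarrow> real) \<Rightarrow> (nat \<Rightarrow> real) \<Rightarrow> real
     \<Rightarrow> (nat \<Rightarrow> real \<Rightarrow> real) \<Rightarrow> bool" where
  "constrained_visc_sol \<rho> r \<gamma> y lam xl v \<longleftrightarrow>
     (\<forall>j\<in>{1,2::nat}. continuous_on {xl..} (v j)) \<and>
     visc_super \<rho> r \<gamma> y lam xl {xl<..} v \<and>
     visc_sub \<rho> r \<gamma> y lam xl {xl..} v"

end

theory Submission
  imports Defs
begin

text \<open>
  On nonnegative slopes the Hamiltonian is \<open>h(a, p) = a p - \<gamma>/(\<gamma>-1) p\<^bsup>1-1/\<gamma>\<^esup>\<close> with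
  drift \<open>a = r x + y\<^sub>j\<close>, and the zeroth-order terms are bounded by \<open>K = (\<rho> + 2\<lambda>\<^sub>j) M\<close>.
  Since \<open>H = +\<infinity>\<close> on negative slopes, testing the supersolution property with linear
  functions shows that \<open>v\<^sub>j\<close> is nondecreasing. Because \<open>r < \<rho>\<close> and \<open>\<rho> x\<^sub>l + y\<^sub>j > 0\<close>,
  the drift is at least some \<open>a\<^sub>1 > 0\<close> near the borrowing limit, where \<open>h(a, p) > K\<close> for
  all large \<open>p\<close>: a steep increase there is excluded by testing the supersolution property
  with \<open>P x - K' (x\<^sub>1 - x)\<^sub>+\<^sup>2\<close>. Where the drift is below \<open>a\<^sub>1\<close> (far right, if \<open>r < 0\<close>),
  the concave term wins, \<open>h(a, P) < -K\<close> for a suitable \<open>P\<close>, and a steep increase is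
  excluded by testing the subsolution property with \<open>P x\<close>. The resulting one-sided slope
  bound on \<open>(x\<^sub>l, \<infinity>)\<close> extends to \<open>x\<^sub>l\<close> by continuity.
\<close>

definition ham_drift :: "real \<Rightarrow> real \<Rightarrow> real \<Rightarrow> real" where
  "ham_drift \<gamma> a p = a * p + \<gamma> / (1 - \<gamma>) * p powr (1 - 1 / \<gamma>)"

lemma Ham_eq_ham_drift: "0 \<le> p \<Longrightarrow> Ham r \<gamma> x y p = ereal (ham_drift \<gamma> (r * x + y) p)"
  by (simp add: Ham_def ham_drift_def)

lemma Ham_negative_slope: "p < 0 \<Longrightarrow> Ham r \<gamma> x y p = \<infinity>"
  by (simp add: Ham_def)

lemma ham_drift_large_slope:
  fixes K :: real
  assumes gam: "1 < \<gamma>" and a1: "0 < a1"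
  obtains P where "0 < P" "\<And>a p. a1 \<le> a \<Longrightarrow> P \<le> p \<Longrightarrow> K < ham_drift \<gamma> a p"
proof
  define C where "C = \<gamma> / (\<gamma> - 1)"
  define P where "P = max ((2 * C / a1) powr \<gamma>) (2 * max K 0 / a1 + 1)"
  have C: "0 < C" and neg_C: "\<gamma> / (1 - \<gamma>) = - C"
    using gam by (auto simp: C_def field_simps)
  have "0 \<le> 2 * max K 0 / a1" using a1 by simp
  then show P: "0 < P" unfolding P_def by linarith
  fix a p assume a: "a1 \<le> a" and p: "P \<le> p"
  have "(2 * C / a1) powr \<gamma> \<le> p" using p unfolding P_def by simp
  then have "((2 * C / a1) powr \<gamma>) powr (1 / \<gamma>) \<le> p powr (1 / \<gamma>)"
    using gam by (intro powr_mono2) auto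
  then have root: "2 * C / a1 \<le> p powr (1 / \<gamma>)"
    using gam C a1 by (simp add: powr_powr)
  have "p powr (1 - 1 / \<gamma>) = p / p powr (1 / \<gamma>)"
    using P p by (simp add: powr_diff)
  also have "\<dots> \<le> p / (2 * C / a1)"
    using root P p C a1 by (intro divide_left_mono) auto
  finally have "C * p powr (1 - 1 / \<gamma>) \<le> a1 * p / 2"
    using C by (simp add: field_simps)
  moreover have "a1 * p \<le> a * p" using a P p by (intro mult_right_mono) auto
  moreover have "a1 * (2 * max K 0 / a1 + 1) \<le> a1 * p"
    using p a1 unfolding P_def by (intro mult_left_mono) auto
  moreover have "a1 * (2 * max K 0 / a1 + 1) = 2 * max K 0 + a1"
    using a1 by (simp add: distrib_left)
  moreover have "K \<le> max K 0" by simp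
  ultimately show "K < ham_drift \<gamma> a p"
    unfolding ham_drift_def neg_C using a1 by linarith
qed

lemma ham_drift_small_drift:
  fixes K :: real
  assumes gam: "1 < \<gamma>"
  obtains P a1 where "0 < P" "0 < a1" "\<And>a. a \<le> a1 \<Longrightarrow> ham_drift \<gamma> a P < - K"
proof
  define C where "C = \<gamma> / (\<gamma> - 1)"
  define T where "T = 2 * (max K 0 + 1) / C"
  define P where "P = T powr (\<gamma> / (\<gamma> - 1))"
  have C: "0 < C" and neg_C: "\<gamma> / (1 - \<gamma>) = - C"
    using gam by (auto simp: C_def field_simps)
  have T: "0 < T" using C by (simp add: T_def add_nonneg_pos)
  then show P: "0 < P" by (simp add: P_def)
  show "0 < (max K 0 + 1) / P" using P by (simp add: add_nonneg_pos)
  have "P powr (1 - 1 / \<gamma>) = T powr (\<gamma> / (\<gamma> - 1) * (1 - 1 / \<gamma>))"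
    by (simp add: P_def powr_powr)
  also have "\<dots> = T" using gam T by (simp add: field_simps)
  finally have "C * P powr (1 - 1 / \<gamma>) = 2 * max K 0 + 2"
    using C by (simp add: T_def)
  fix a assume "a \<le> (max K 0 + 1) / P"
  then have "a * P \<le> max K 0 + 1" using P by (simp add: pos_le_divide_eq)
  moreover have "ham_drift \<gamma> a P = a * P - (2 * max K 0 + 2)"
    unfolding ham_drift_def neg_C using \<open>C * P powr (1 - 1 / \<gamma>) = 2 * max K 0 + 2\<close> by simp
  moreover have "K \<le> max K 0" by simp
  ultimately show "ham_drift \<gamma> a P < - K" by linarith
qed

lemma loc_min_rel_iff_loc_max_rel_uminus:
  "loc_min_rel D g c \<longleftrightarrow> loc_max_rel D (\<lambda>x. - g x) c"
  by (simp add: loc_min_rel_def loc_max_rel_def)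

lemma loc_max_rel_interior:
  fixes g :: "real \<Rightarrow> real"
  assumes cont: "continuous_on {a..b} g" and m: "m \<in> {a..b}" and "g a < g m" "g b < g m"
  shows "\<exists>c\<in>{a<..<b}. loc_max_rel D g c"
proof -
  obtain c where c: "c \<in> {a..b}" "\<And>x. x \<in> {a..b} \<Longrightarrow> g x \<le> g c"
    using continuous_attains_sup[OF compact_Icc _ cont] m by fastforce
  then have "g m \<le> g c" using m by blast
  then have "c \<in> {a<..<b}" using c(1) assms(3,4) by (cases "c = a \<or> c = b") auto
  moreover have "loc_max_rel D g c"
    unfolding loc_max_rel_def
    using \<open>c \<in> {a<..<b}\<close> c(2)
    by (intro exI[of _ "min (c - a) (b - c)"]) (auto simp: abs_less_iff)
  ultimately show ?thesis by blast
qed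

lemma loc_min_rel_interior:
  fixes g :: "real \<Rightarrow> real"
  assumes "continuous_on {a..b} g" and "m \<in> {a..b}" and "g m < g a" "g m < g b"
  shows "\<exists>c\<in>{a<..<b}. loc_min_rel D g c"
  unfolding loc_min_rel_iff_loc_max_rel_uminus
  using assms by (intro loc_max_rel_interior[of a b _ m]) (auto intro: continuous_intros)

text \<open>Boundedness forces \<open>w x - P x\<close> back down far to the right of \<open>x\<^sub>2\<close>.\<close>
lemma exists_loc_max_tilted:
  fixes w :: "real \<Rightarrow> real"
  assumes cont: "continuous_on {x1..} w" and bnd: "\<And>x. x1 \<le> x \<Longrightarrow> \<bar>w x\<bar> \<le> M"
    and P: "0 < P" and x: "x1 < x2" and steep: "P * (x2 - x1) < w x2 - w x1"
  shows "\<exists>c>x1. loc_max_rel D (\<lambda>x. w x - P * x) c"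
proof -
  define X where "X = x2 + 2 * M / P + 1"
  have "0 \<le> M" using bnd[of x1] by simp
  then have X: "x2 < X" and "P * (X - x2) = 2 * M + P"
    using P by (auto simp: X_def field_simps add_nonneg_pos)
  moreover have "\<bar>w x2\<bar> \<le> M" "\<bar>w X\<bar> \<le> M" using bnd x X by auto
  ultimately have "w X - P * X < w x2 - P * x2" using P by (simp add: algebra_simps abs_le_iff)
  moreover have "w x1 - P * x1 < w x2 - P * x2" using steep by (simp add: algebra_simps)
  moreover have "continuous_on {x1..X} (\<lambda>x. w x - P * x)"
    by (intro continuous_intros continuous_on_subset[OF cont]) auto
  ultimately show ?thesis
    using loc_max_rel_interior[of x1 X _ x2] x X by fastforce
qed

text \<open>The penalty \<open>K (x\<^sub>1 - x)\<^sub>+\<^sup>2\<close> keeps the minimum of the tilted function away from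
  the left endpoint \<open>a\<close> without lowering the slope of the test function below \<open>P\<close>.\<close>
lemma exists_loc_min_penalized:
  fixes w :: "real \<Rightarrow> real"
  assumes cont: "continuous_on {a..b} w" and x1: "a < x1" "x1 < b"
    and steep: "P * (b - x1) < w b - w x1"
  shows "\<exists>K\<ge>0. \<exists>c\<in>{a<..<b}. loc_min_rel D (\<lambda>x. w x - (P * x - K * (max 0 (x1 - x))\<^sup>2)) c"
proof -
  define K where "K = max 0 ((w x1 - w a - P * (x1 - a)) / (x1 - a)\<^sup>2) + 1"
  let ?g = "\<lambda>x. w x - (P * x - K * (max 0 (x1 - x))\<^sup>2)"
  have "(w x1 - w a - P * (x1 - a)) / (x1 - a)\<^sup>2 < K"
    unfolding K_def by linarith
  then have "w x1 - w a - P * (x1 - a) < K * (x1 - a)\<^sup>2"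
    using x1 by (simp add: pos_divide_less_eq)
  then have "?g x1 < ?g a" using x1 by (simp add: algebra_simps)
  moreover have "?g x1 < ?g b" using steep x1 by (simp add: algebra_simps)
  moreover have "continuous_on {a..b} ?g" by (intro continuous_intros cont)
  ultimately have "\<exists>c\<in>{a<..<b}. loc_min_rel D ?g c"
    using loc_min_rel_interior[of a b _ x1] x1 by auto
  moreover have "0 \<le> K" by (simp add: K_def)
  ultimately show ?thesis by blast
qed

lemma DERIV_max_0_square:
  fixes b x :: real
  shows "((\<lambda>x. (max 0 (b - x))\<^sup>2) has_real_derivative - 2 * max 0 (b - x)) (at x)"
proof (cases x b rule: linorder_cases)
  case less
  have "((\<lambda>x. (b - x)\<^sup>2) has_real_derivative - 2 * max 0 (b - x)) (at x)"
    using less by (auto intro!: derivative_eq_intros)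
  then show ?thesis
    by (rule has_field_derivative_transform_within_open[where S = "{..<b}"]) (use less in auto)
next
  case greater
  have "((\<lambda>x. 0) has_real_derivative - 2 * max 0 (b - x)) (at x)"
    using greater by simp
  then show ?thesis
    by (rule has_field_derivative_transform_within_open[where S = "{b<..}"]) (use greater in auto)
next
  case equal
  have "((\<lambda>z. - max 0 (b - z)) \<longlongrightarrow> - max 0 (b - b)) (at b)"
    by (intro tendsto_intros)
  moreover have "\<forall>\<^sub>F z in at b.
      - max 0 (b - z) = ((max 0 (b - z))\<^sup>2 - (max 0 (b - b))\<^sup>2) / (z - b)"
    by (auto simp: eventually_at_filter power2_eq_square max_def field_simps)
  ultimately have "((\<lambda>z. ((max 0 (b - z))\<^sup>2 - (max 0 (b - b))\<^sup>2) / (z - b))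
      \<longlongrightarrow> - 2 * max 0 (b - b)) (at b)"
    by (simp add: tendsto_cong)
  then show ?thesis
    using equal by (simp add: has_field_derivative_iff)
qed

lemma penalized_linear_C1:
  fixes P K b :: real
  shows "(\<lambda>x. P * x - K * (max 0 (b - x))\<^sup>2) C1_differentiable_on UNIV"
    and "deriv (\<lambda>x. P * x - K * (max 0 (b - x))\<^sup>2) c = P + 2 * K * max 0 (b - c)"
proof -
  have D: "((\<lambda>x. P * x - K * (max 0 (b - x))\<^sup>2) has_real_derivative P + 2 * K * max 0 (b - x)) (at x)"
    for x
    using DERIV_diff[OF DERIV_cmult_Id[of P] DERIV_cmult[OF DERIV_max_0_square, of K]]
    by (simp add: algebra_simps)
  show "(\<lambda>x. P * x - K * (max 0 (b - x))\<^sup>2) C1_differentiable_on UNIV"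
    unfolding C1_differentiable_on_def
    using D
    by (intro exI[of _ "\<lambda>x. P + 2 * K * max 0 (b - x)"])
      (auto simp: has_real_derivative_iff_has_vector_derivative intro!: continuous_intros)
  show "deriv (\<lambda>x. P * x - K * (max 0 (b - x))\<^sup>2) c = P + 2 * K * max 0 (b - c)"
    using D by (rule DERIV_imp_deriv)
qed

locale bounded_solution_component =
  fixes \<rho> r \<gamma> xl M :: real and y lam :: "nat \<Rightarrow> real" and v :: "nat \<Rightarrow> real \<Rightarrow> real"
    and j :: nat
  assumes sol: "constrained_visc_sol \<rho> r \<gamma> y lam xl v"
    and bounded: "\<And>i x. i \<in> {1, 2} \<Longrightarrow> xl \<le> x \<Longrightarrow> \<bar>v i x\<bar> \<le> M"
    and j: "j \<in> {1, 2}"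
    and rho_pos: "0 < \<rho>" and lam_nonneg: "0 \<le> lam j" and gamma_gt_1: "1 < \<gamma>"
begin

definition ham_bound :: real where
  "ham_bound = (\<rho> + 2 * lam j) * M"

lemma continuous_component: "continuous_on {xl..} (v j)"
  using sol j by (auto simp: constrained_visc_sol_def)

lemma bounded_component: "xl \<le> x \<Longrightarrow> \<bar>v j x\<bar> \<le> M"
  using bounded j by blast

lemma zeroth_order_bound:
  assumes "xl \<le> x"
  shows "\<bar>\<rho> * v j x - lam j * (v (3 - j) x - v j x)\<bar> \<le> ham_bound"
proof -
  have "\<bar>v j x\<bar> \<le> M" "\<bar>v (3 - j) x\<bar> \<le> M"
    using bounded j assms by auto
  then have "\<bar>\<rho> * v j x\<bar> \<le> \<rho> * M" "\<bar>lam j * (v (3 - j) x - v j x)\<bar> \<le> lam j * (2 * M)"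
    using rho_pos lam_nonneg by (auto simp: abs_mult intro!: mult_left_mono)
  then have "\<bar>\<rho> * v j x\<bar> + \<bar>lam j * (v (3 - j) x - v j x)\<bar> \<le> ham_bound"
    unfolding ham_bound_def by (simp add: algebra_simps)
  then show ?thesis
    using abs_triangle_ineq4 order_trans by blast
qed

lemma supersolution_slope:
  assumes "\<phi> C1_differentiable_on UNIV" "xl < c" "loc_min_rel {xl..} (\<lambda>x. v j x - \<phi> x) c"
  shows "0 \<le> deriv \<phi> c" and "ham_drift \<gamma> (r * c + y j) (deriv \<phi> c) \<le> ham_bound"
proof -
  have super: "Ham r \<gamma> c (y j) (deriv \<phi> c) + ereal (lam j * (v (3 - j) c - v j c))
      \<le> ereal (\<rho> * v j c)"
    using sol assms j unfolding constrained_visc_sol_def visc_super_def by auto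
  then show nonneg: "0 \<le> deriv \<phi> c"
    by (cases "0 \<le> deriv \<phi> c") (auto simp: Ham_negative_slope)
  have "ham_drift \<gamma> (r * c + y j) (deriv \<phi> c) \<le> \<rho> * v j c - lam j * (v (3 - j) c - v j c)"
    using super nonneg by (simp add: Ham_eq_ham_drift)
  then show "ham_drift \<gamma> (r * c + y j) (deriv \<phi> c) \<le> ham_bound"
    using zeroth_order_bound[of c] assms(2) by (simp add: abs_le_iff)
qed

lemma subsolution_slope:
  assumes "\<phi> C1_differentiable_on UNIV" "xl \<le> c" "loc_max_rel {xl..} (\<lambda>x. v j x - \<phi> x) c"
    and "0 \<le> deriv \<phi> c"
  shows "- ham_bound \<le> ham_drift \<gamma> (r * c + y j) (deriv \<phi> c)"
proof -
  have "ereal (\<rho> * v j c)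
      \<le> Ham r \<gamma> c (y j) (deriv \<phi> c) + ereal (lam j * (v (3 - j) c - v j c))"
    using sol assms j unfolding constrained_visc_sol_def visc_sub_def by auto
  then have "\<rho> * v j c - lam j * (v (3 - j) c - v j c) \<le> ham_drift \<gamma> (r * c + y j) (deriv \<phi> c)"
    using assms(4) by (simp add: Ham_eq_ham_drift)
  then show ?thesis
    using zeroth_order_bound[OF assms(2)] by (simp add: abs_le_iff)
qed

lemma mono_on_component: "mono_on {xl..} (v j)"
proof (rule mono_onI, rule ccontr)
  fix x1 x2 assume x: "x1 \<in> {xl..}" "x2 \<in> {xl..}" "x1 \<le> x2" and "\<not> v j x1 \<le> v j x2"
  then have x12: "x1 < x2" and drop: "v j x2 < v j x1" by (auto simp: less_le)
  define s where "s = (v j x1 - v j x2) / (2 * (x2 - x1))"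
  have s: "0 < s" and "2 * (s * (x2 - x1)) = v j x1 - v j x2"
    using drop x12 by (auto simp: s_def field_simps)
  then have "s * (x2 - x1) < v j x1 - v j x2"
    using drop by linarith
  then have steep: "s * (x2 - x1) < - v j x2 - - v j x1"
    by simp
  have cont: "continuous_on {x1..} (\<lambda>x. - v j x)"
    using x by (intro continuous_intros continuous_on_subset[OF continuous_component]) auto
  have bnd: "\<And>x. x1 \<le> x \<Longrightarrow> \<bar>- v j x\<bar> \<le> M"
    using x bounded_component by auto
  obtain c where c: "x1 < c" "loc_max_rel {xl..} (\<lambda>x. - v j x - s * x) c"
    using exists_loc_max_tilted[OF cont bnd s x12 steep] by blast
  then have "loc_min_rel {xl..} (\<lambda>x. v j x - (- s) * x) c"
    by (simp add: loc_min_rel_iff_loc_max_rel_uminus)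
  then have "0 \<le> deriv (\<lambda>x. (- s) * x) c"
    using supersolution_slope(1)[of "\<lambda>x. (- s) * x" c] c(1) x by simp
  then show False using s by simp
qed

lemma slope_bound_supersolution:
  assumes x: "xl < x1" "x1 < x2"
    and large: "\<And>c p. xl < c \<Longrightarrow> c < x2 \<Longrightarrow> P \<le> p \<Longrightarrow> ham_bound < ham_drift \<gamma> (r * c + y j) p"
  shows "v j x2 - v j x1 \<le> P * (x2 - x1)"
proof (rule ccontr)
  assume "\<not> ?thesis"
  then have steep: "P * (x2 - x1) < v j x2 - v j x1" by simp
  have "continuous_on {xl..x2} (v j)"
    by (rule continuous_on_subset[OF continuous_component]) auto
  then obtain K c where K: "0 \<le> K" and c: "xl < c" "c < x2"
    and min: "loc_min_rel {xl..} (\<lambda>x. v j x - (P * x - K * (max 0 (x1 - x))\<^sup>2)) c"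
    using exists_loc_min_penalized[OF _ x steep, where D = "{xl..}"] by fastforce
  let ?\<phi> = "\<lambda>x. P * x - K * (max 0 (x1 - x))\<^sup>2"
  have "ham_drift \<gamma> (r * c + y j) (deriv ?\<phi> c) \<le> ham_bound"
    using supersolution_slope(2)[OF penalized_linear_C1(1) c(1) min] .
  moreover have "P \<le> deriv ?\<phi> c"
    using K by (simp add: penalized_linear_C1(2))
  ultimately show False
    using large[OF c] by fastforce
qed

lemma slope_bound_subsolution:
  assumes P: "0 < P" and x: "xl \<le> x1" "x1 < x2"
    and small: "\<And>c. x1 < c \<Longrightarrow> ham_drift \<gamma> (r * c + y j) P < - ham_bound"
  shows "v j x2 - v j x1 \<le> P * (x2 - x1)"
proof (rule ccontr)
  assume "\<not> ?thesis"
  then have steep: "P * (x2 - x1) < v j x2 - v j x1" by simp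
  have "continuous_on {x1..} (v j)"
    by (rule continuous_on_subset[OF continuous_component]) (use x in auto)
  moreover have "\<And>x. x1 \<le> x \<Longrightarrow> \<bar>v j x\<bar> \<le> M"
    using x bounded_component by auto
  ultimately obtain c where c: "x1 < c" and max: "loc_max_rel {xl..} (\<lambda>x. v j x - P * x) c"
    using exists_loc_max_tilted[OF _ _ P x(2) steep] by blast
  have "- ham_bound \<le> ham_drift \<gamma> (r * c + y j) (deriv (\<lambda>x. P * x) c)"
    using subsolution_slope[of "\<lambda>x. P * x" c] max c x P by simp
  then show False
    using small[OF c] by simp
qed

lemma one_sided_slope_bound:
  assumes drift: "0 < r * xl + y j"
  obtains L where "0 \<le> L" "\<And>x1 x2. xl < x1 \<Longrightarrow> x1 < x2 \<Longrightarrow> v j x2 - v j x1 \<le> L * (x2 - x1)"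
proof -
  obtain P1 a1' where P1: "0 < P1" and "0 < a1'"
    and small: "\<And>a. a \<le> a1' \<Longrightarrow> ham_drift \<gamma> a P1 < - ham_bound"
    using ham_drift_small_drift[OF gamma_gt_1] by blast
  define a1 where "a1 = min a1' (r * xl + y j)"
  have "0 < a1" using \<open>0 < a1'\<close> drift by (simp add: a1_def)
  then obtain P2 where "0 < P2"
    and large: "\<And>a p. a1 \<le> a \<Longrightarrow> P2 \<le> p \<Longrightarrow> ham_bound < ham_drift \<gamma> a p"
    using ham_drift_large_slope[OF gamma_gt_1] by blast
  define L where "L = max P1 P2"
  have by_super: "v j x2 - v j x1 \<le> L * (x2 - x1)"
    if "xl < x1" "x1 < x2" "\<And>c. xl < c \<Longrightarrow> c < x2 \<Longrightarrow> a1 \<le> r * c + y j" for x1 x2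
  proof -
    have "v j x2 - v j x1 \<le> P2 * (x2 - x1)"
      using that by (intro slope_bound_supersolution large) auto
    also have "\<dots> \<le> L * (x2 - x1)"
      using that by (intro mult_right_mono) (auto simp: L_def)
    finally show ?thesis .
  qed
  have by_sub: "v j x2 - v j x1 \<le> L * (x2 - x1)"
    if "xl \<le> x1" "x1 < x2" "\<And>c. x1 < c \<Longrightarrow> r * c + y j \<le> a1" for x1 x2
  proof -
    have "v j x2 - v j x1 \<le> P1 * (x2 - x1)"
      using that P1 by (intro slope_bound_subsolution small) (auto simp: a1_def)
    also have "\<dots> \<le> L * (x2 - x1)"
      using that by (intro mult_right_mono) (auto simp: L_def)
    finally show ?thesis .
  qed
  have "v j x2 - v j x1 \<le> L * (x2 - x1)" if x: "xl < x1" "x1 < x2" for x1 x2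
  proof (cases "0 \<le> r")
    case True
    then have "a1 \<le> r * c + y j" if "xl < c" for c
      using that mult_left_mono[of xl c r] by (simp add: a1_def)
    then show ?thesis using by_super[OF x] by blast
  next
    case False
    define xa where "xa = (a1 - y j) / r"
    have above: "a1 \<le> r * c + y j" if "c \<le> xa" for c
      using False that mult_left_mono_neg[of c xa r] by (simp add: xa_def)
    have below: "r * c + y j \<le> a1" if "xa \<le> c" for c
      using False that mult_left_mono_neg[of xa c r] by (simp add: xa_def)
    consider "x2 \<le> xa" | "xa \<le> x1" | "x1 < xa" "xa < x2" by linarith
    then show ?thesis
    proof cases
      case 1
      then show ?thesis using by_super[OF x] above by simp
    next
      case 2
      then show ?thesis using by_sub[of x1 x2] x below by simp
    next
      case 3
      then have "v j xa - v j x1 \<le> L * (xa - x1)" "v j x2 - v j xa \<le> L * (x2 - xa)"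
        using by_super[of x1 xa] by_sub[of xa x2] above below x by auto
      then show ?thesis by (simp add: algebra_simps)
    qed
  qed
  moreover have "0 \<le> L" using P1 by (simp add: L_def)
  ultimately show thesis using that by blast
qed

lemma lipschitz_component:
  assumes "0 < r * xl + y j"
  shows "\<exists>L. L-lipschitz_on {xl..} (v j)"
proof -
  obtain L where L: "0 \<le> L" and slope: "\<And>x1 x2. xl < x1 \<Longrightarrow> x1 < x2 \<Longrightarrow> v j x2 - v j x1 \<le> L * (x2 - x1)"
    using one_sided_slope_bound[OF assms] by blast
  have "L-lipschitz_on {xl<..} (v j)"
  proof (rule lipschitz_on_leI[OF _ L])
    fix x1 x2 :: real assume x: "x1 \<in> {xl<..}" "x2 \<in> {xl<..}" "x1 \<le> x2"
    have "v j x1 \<le> v j x2"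
      using mono_onD[OF mono_on_component] x by auto
    moreover have "v j x2 - v j x1 \<le> L * (x2 - x1)"
      using slope[of x1 x2] x by (cases "x1 = x2") auto
    ultimately show "dist (v j x1) (v j x2) \<le> L * dist x1 x2"
      using x by (simp add: dist_real_def)
  qed
  then have "L-lipschitz_on (closure {xl<..}) (v j)"
    using continuous_component by (intro lipschitz_on_closure) auto
  then show ?thesis by auto
qed

end

theorem mainTheorem6:
  fixes \<rho> r \<gamma> xl :: real and y lam :: "nat \<Rightarrow> real" and v :: "nat \<Rightarrow> real \<Rightarrow> real"
  assumes "\<rho> > 0" and "r < \<rho>"
    and "0 < y 1" and "y 1 < y 2"
    and "\<gamma> > 1"
    and "xl \<le> 0" and "\<rho> * xl + y 1 > 0" and "\<rho> * xl + y 2 > 0"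
    and "lam 1 \<ge> 0" and "lam 2 \<ge> 0"
    and "constrained_visc_sol \<rho> r \<gamma> y lam xl v"
    and "\<exists>M. \<forall>j\<in>{1,2::nat}. \<forall>x\<in>{xl..}. \<bar>v j x\<bar> \<le> M"
  shows "\<forall>j\<in>{1,2::nat}. \<exists>L. L-lipschitz_on {xl..} (v j)"
proof
  fix j :: nat assume j: "j \<in> {1, 2}"
  obtain M where M: "\<forall>i\<in>{1,2::nat}. \<forall>x\<in>{xl..}. \<bar>v i x\<bar> \<le> M"
    using assms(12) by blast
  interpret bounded_solution_component \<rho> r \<gamma> xl M y lam v j
    using assms(1,5,9-11) M j by unfold_locales auto
  have "0 \<le> (r - \<rho>) * xl"
    using assms(2,6) by (simp add: mult_nonpos_nonpos)
  moreover have "0 < \<rho> * xl + y j"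
    using assms(7,8) j by auto
  ultimately have "0 < r * xl + y j"
    by (simp add: algebra_simps)
  then show "\<exists>L. L-lipschitz_on {xl..} (v j)"
    by (rule lipschitz_component)
qed

end
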